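(* Let $\pi:K\{X\}_\infty\to K\{X\}$ be the linear projection sending each binary monomial (and $1$) to itself and every non-binary monomial to $0$. Then the graded dual of $(K\{X\},\Delta_a)$ is the quotient of $(K\{X\}_\infty,\sqcup\!\sqcup)$ by $\ker\pi$; explicitly, identifying $K\{X\}$ with its graded dual via the dual basis of binary monomials, the multiplication dual to $\Delta_a|_{K\{X\}}$ is $g_1\otimes g_2\mapsto\pi(g_1\sqcup\!\sqcup g_2)$ for $g_1,g_2\in K\{X\}$.
   Context: $K$ is a field of characteristic $0$, $X=\{x_1,x_2,\dots\}$ a finite or countable set of variables. A planar rooted tree is reduced if no vertex has exactly one incoming edge. $K\{X\}_\infty$ has basis the monomials: the empty tree $1$ and all planar reduced rooted trees with leaves labelled by elements of $X$; for $k\ge2$, $\vee^k$ grafts $k$ nonempty trees onto a new root, extended multilinearly, with unit conventions (arguments $1$ omitted, $\vee^1=\mathrm{id}$, $\vee^k(1,\dots,1)=1$). $K\{X\}$ is the span of $1$ and the binary monomials (the free unitary magma algebra, $a\cdot b=\vee^2(a,b)$). Tensor squares carry the operations componentwise, and $\Delta_a$ is the unique unital homomorphism with $\Delta_a(x_i)=x_i\otimes1+1\otimes x_i$; it maps $K\{X\}$ into $K\{X\}\otimes K\{X\}$. $\langle\,,\rangle$ is the bilinear form making monomials orthonormal, extended to tensor products factorwise, and $\sqcup\!\sqcup$ on $K\{X\}_\infty$ is defined by $\langle g_1\sqcup\!\sqcup g_2,h\rangle=\langle g_1\otimes g_2,\Delta_a(h)\rangle$ for all $h\in K\{X\}_\infty$.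 *)

theory Defs
  imports Main "HOL-Library.Countable"
begin

text \<open>Planar rooted trees with leaves labelled by elements of the alphabet 'x.
  A monomial of K{X}_infinity is either the empty tree (None) or Some t with t reduced.\<close>

datatype 'x tree = Leaf 'x | Node "'x tree list"

type_synonym 'x mono = "'x tree option"

fun reduced :: "'x tree \<Rightarrow> bool" where
  "reduced (Leaf x) = True"
| "reduced (Node ts) = (2 \<le> length ts \<and> (\<forall>t\<in>set ts. reduced t))"

fun binary :: "'x tree \<Rightarrow> bool" where
  "binary (Leaf x) = True"
| "binary (Node ts) = (length ts = 2 \<and> (\<forall>t\<in>set ts. binary t))"

definition is_mono :: "'x mono \<Rightarrow> bool" where
  "is_mono m = (case m of None \<Rightarrow> True | Some t \<Rightarrow> reduced t)"

definition is_bin_mono :: "'x mono \<Rightarrow> bool" where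
  "is_bin_mono m = (case m of None \<Rightarrow> True | Some t \<Rightarrow> binary t)"

definition Kinf :: "('x mono \<Rightarrow> 'k::field) set" where
  "Kinf = {f. finite {m. f m \<noteq> 0} \<and> (\<forall>m. f m \<noteq> 0 \<longrightarrow> is_mono m)}"

definition KX :: "('x mono \<Rightarrow> 'k::field) set" where
  "KX = {f. finite {m. f m \<noteq> 0} \<and> (\<forall>m. f m \<noteq> 0 \<longrightarrow> is_bin_mono m)}"

text \<open>Grafting of monomials vee^k with unit conventions (arguments 1 omitted,
  vee^1 = id, vee^k(1,...,1) = 1).\<close>
definition graft :: "'x mono list \<Rightarrow> 'x mono" where
  "graft ms = (let ts = [t. Some t \<leftarrow> ms] in
     if ts = [] then None else if length ts = 1 then Some (hd ts) else Some (Node ts))"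

text \<open>Tensor square: coefficient functions on pairs of monomials; vee^k acts componentwise
  and multilinearly.\<close>
definition vee_t :: "(('x mono \<times> 'x mono) \<Rightarrow> 'k::field) list \<Rightarrow> ('x mono \<times> 'x mono) \<Rightarrow> 'k" where
  "vee_t Ts = (\<lambda>(a, b). \<Sum>ps \<in> {ps. length ps = length Ts \<and> (\<forall>i<length Ts. (Ts ! i) (ps ! i) \<noteq> 0)
        \<and> graft (map fst ps) = a \<and> graft (map snd ps) = b}.
      \<Prod>i<length Ts. (Ts ! i) (ps ! i))"

text \<open>Delta_a: the unital homomorphism with Delta_a(x) = x(x)1 + 1(x)x, written out on monomials.\<close>
fun deltaT :: "'x tree \<Rightarrow> ('x mono \<times> 'x mono) \<Rightarrow> 'k::field" where
  "deltaT (Leaf x) = (\<lambda>p. if p = (Some (Leaf x), None) \<or> p = (None, Some (Leaf x)) then 1 else 0)"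
| "deltaT (Node ts) = vee_t (map deltaT ts)"

definition delta_a :: "'x mono \<Rightarrow> ('x mono \<times> 'x mono) \<Rightarrow> 'k::field" where
  "delta_a m = (case m of None \<Rightarrow> (\<lambda>p. if p = (None, None) then 1 else 0) | Some t \<Rightarrow> deltaT t)"

definition tensor :: "('x mono \<Rightarrow> 'k::field) \<Rightarrow> ('x mono \<Rightarrow> 'k) \<Rightarrow> ('x mono \<times> 'x mono) \<Rightarrow> 'k" where
  "tensor g1 g2 = (\<lambda>(a, b). g1 a * g2 b)"

text \<open>The bilinear form making (pairs of) monomials orthonormal.\<close>
definition pairT :: "(('x mono \<times> 'x mono) \<Rightarrow> 'k::field) \<Rightarrow> (('x mono \<times> 'x mono) \<Rightarrow> 'k) \<Rightarrow> 'k" where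
  "pairT S T = (\<Sum>p \<in> {p. S p \<noteq> 0}. S p * T p)"

text \<open>Shuffle product: <g1 sh g2, h> = <g1 (x) g2, Delta_a h> for all monomials h.\<close>
definition shuffle :: "('x mono \<Rightarrow> 'k::field) \<Rightarrow> ('x mono \<Rightarrow> 'k) \<Rightarrow> 'x mono \<Rightarrow> 'k" where
  "shuffle g1 g2 = (\<lambda>h. if is_mono h then pairT (tensor g1 g2) (delta_a h) else 0)"

definition proj :: "('x mono \<Rightarrow> 'k::field) \<Rightarrow> 'x mono \<Rightarrow> 'k" where
  "proj f = (\<lambda>m. if is_bin_mono m then f m else 0)"

text \<open>Multiplication on the graded dual of (K{X}, Delta_a), identified with K{X} via the dual
  basis of binary monomials: transpose of Delta_a restricted to K{X}.\<close>
definition dual_mult :: "('x mono \<Rightarrow> 'k::field) \<Rightarrow> ('x mono \<Rightarrow> 'k) \<Rightarrow> 'x mono \<Rightarrow> 'k" where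
  "dual_mult g1 g2 = (\<lambda>h. if is_bin_mono h then pairT (tensor g1 g2) (delta_a h) else 0)"

end

theory Submission
  imports Defs
begin

text \<open>Every pair (a, b) in the support of \<open>\<Delta>\<^sub>a(h)\<close> splits the leaves of h between a and b.
  Hence a fixed \<open>a \<otimes> b\<close> pairs nontrivially with \<open>\<Delta>\<^sub>a(h)\<close> for only finitely many reduced trees h:
  those with as many leaves as a and b together, labelled by letters occurring in a or b. So the
  shuffle product of finitely supported elements is finitely supported. Moreover, grafting two
  binary monomials (with the unit convention) yields a binary monomial, so \<open>\<Delta>\<^sub>a\<close> of a binary
  monomial is supported on pairs of binary monomials; pairing it with \<open>g\<^sub>1 \<otimes> g\<^sub>2\<close> therefore only
  sees \<open>\<pi> g\<^sub>1 \<otimes> \<pi> g\<^sub>2\<close>, which is the identity \<open>\<pi>(g\<^sub>1 \<squnion>\<squnion> g\<^sub>2) = \<pi> g\<^sub>1 \<cdot> \<pi> g\<^sub>2\<close>.\<close>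

fun leaf_count :: "'x tree \<Rightarrow> nat" where
  "leaf_count (Leaf x) = 1"
| "leaf_count (Node ts) = sum_list (map leaf_count ts)"

definition mono_degree :: "'x mono \<Rightarrow> nat" where
  "mono_degree m = (case m of None \<Rightarrow> 0 | Some t \<Rightarrow> leaf_count t)"

definition mono_labels :: "'x mono \<Rightarrow> 'x set" where
  "mono_labels m = (case m of None \<Rightarrow> {} | Some t \<Rightarrow> set_tree t)"

lemma mono_degree_graft: "mono_degree (graft ms) = sum_list (map mono_degree ms)"
proof -
  have "sum_list (map mono_degree ms) = sum_list (map leaf_count [t. Some t \<leftarrow> ms])"
    by (induction ms) (auto simp: mono_degree_def split: option.splits)
  then show ?thesis
    unfolding graft_def Let_def
    by (cases "[t. Some t \<leftarrow> ms]" rule: remdups_adj.cases) (auto simp: mono_degree_def)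
qed

lemma mono_labels_graft: "mono_labels (graft ms) = \<Union>(mono_labels ` set ms)"
proof -
  have "\<Union>(mono_labels ` set ms) = \<Union>(set_tree ` set [t. Some t \<leftarrow> ms])"
    by (induction ms) (auto simp: mono_labels_def split: option.splits)
  then show ?thesis
    unfolding graft_def Let_def
    by (cases "[t. Some t \<leftarrow> ms]" rule: remdups_adj.cases) (auto simp: mono_labels_def)
qed

lemma binary_imp_reduced: "binary t \<Longrightarrow> reduced t"
  by (induction t) auto

lemma is_bin_mono_imp_is_mono: "is_bin_mono m \<Longrightarrow> is_mono m"
  by (auto simp: is_bin_mono_def is_mono_def binary_imp_reduced split: option.splits)

lemma is_bin_mono_graft2:
  "is_bin_mono m\<^sub>1 \<Longrightarrow> is_bin_mono m\<^sub>2 \<Longrightarrow> is_bin_mono (graft [m\<^sub>1, m\<^sub>2])"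
  by (cases m\<^sub>1; cases m\<^sub>2) (auto simp: graft_def is_bin_mono_def)

lemma vee_t_nonzeroE:
  assumes "vee_t Ts (a, b) \<noteq> 0"
  obtains ps where "length ps = length Ts" "\<forall>i<length Ts. (Ts ! i) (ps ! i) \<noteq> 0"
    "graft (map fst ps) = a" "graft (map snd ps) = b"
proof -
  let ?E = "{ps. length ps = length Ts \<and> (\<forall>i<length Ts. (Ts ! i) (ps ! i) \<noteq> 0)
      \<and> graft (map fst ps) = a \<and> graft (map snd ps) = b}"
  have "?E \<noteq> {}"
  proof
    assume "?E = {}"
    then have "vee_t Ts (a, b) = 0"
      unfolding vee_t_def prod.case \<open>?E = {}\<close> by simp
    with assms show False by contradiction
  qed
  then show ?thesis using that by blast
qed

lemma deltaT_nonzero_induct [consumes 1, case_names Leaf_left Leaf_right Node]: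
  assumes "deltaT t (a, b) \<noteq> (0::'k::field)"
    and "\<And>x. P (Leaf x) (Some (Leaf x)) None"
    and "\<And>x. P (Leaf x) None (Some (Leaf x))"
    and "\<And>ts ps. list_all2 (\<lambda>t (a, b). P t a b) ts ps \<Longrightarrow>
           P (Node ts) (graft (map fst ps)) (graft (map snd ps))"
  shows "P t a b"
  using assms(1)
proof (induction t arbitrary: a b)
  case (Leaf x)
  then have "(a, b) = (Some (Leaf x), None) \<or> (a, b) = (None, Some (Leaf x))"
    by (simp split: if_splits)
  then show ?case using assms(2,3) by blast
next
  case (Node ts)
  have "vee_t (map deltaT ts) (a, b) \<noteq> (0::'k)"
    using Node.prems by simp
  then obtain ps where ps: "length ps = length ts"
      "\<forall>i<length ts. (map deltaT ts ! i) (ps ! i) \<noteq> (0::'k)"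
      "graft (map fst ps) = a" "graft (map snd ps) = b"
    by (rule vee_t_nonzeroE) simp_all
  have "P (ts ! i) (fst (ps ! i)) (snd (ps ! i))" if "i < length ts" for i
    using Node.IH[of "ts ! i" "fst (ps ! i)" "snd (ps ! i)"] ps(2) that by simp
  then have "list_all2 (\<lambda>t (a, b). P t a b) ts ps"
    by (simp add: list_all2_conv_all_nth split_beta ps(1))
  then show ?case using assms(4) ps(3,4) by blast
qed

lemma deltaT_nonzero_degree_labels:
  assumes "deltaT t (a, b) \<noteq> (0::'k::field)"
  shows "mono_degree a + mono_degree b = leaf_count t \<and> mono_labels a \<union> mono_labels b = set_tree t"
  using assms
proof (induction rule: deltaT_nonzero_induct)
  case (Node ts ps)
  then have "sum_list (map mono_degree (map fst ps)) + sum_list (map mono_degree (map snd ps))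
        = sum_list (map leaf_count ts)
      \<and> \<Union>(mono_labels ` set (map fst ps)) \<union> \<Union>(mono_labels ` set (map snd ps))
        = \<Union>(set_tree ` set ts)"
    by (induction rule: list_all2_induct) auto
  then show ?case by (simp add: mono_degree_graft mono_labels_graft)
qed (auto simp: mono_degree_def mono_labels_def)

lemma deltaT_nonzero_binary:
  assumes "deltaT t (a, b) \<noteq> (0::'k::field)" and "binary t"
  shows "is_bin_mono a \<and> is_bin_mono b"
  using assms
proof (induction rule: deltaT_nonzero_induct)
  case (Node ts ps)
  then obtain t\<^sub>0 t\<^sub>1 where "ts = [t\<^sub>0, t\<^sub>1]" "binary t\<^sub>0" "binary t\<^sub>1"
    by (auto simp: numeral_2_eq_2 length_Suc_conv)
  with Node obtain p\<^sub>0 p\<^sub>1 where "ps = [p\<^sub>0, p\<^sub>1]"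
    "is_bin_mono (fst p\<^sub>0)" "is_bin_mono (snd p\<^sub>0)" "is_bin_mono (fst p\<^sub>1)" "is_bin_mono (snd p\<^sub>1)"
    by (auto simp: list_all2_Cons1 split_beta)
  then show ?case by (simp add: is_bin_mono_graft2)
qed (auto simp: is_bin_mono_def)

lemma delta_a_binary_support:
  "is_bin_mono h \<Longrightarrow> delta_a h p \<noteq> (0::'k::field) \<Longrightarrow> is_bin_mono (fst p) \<and> is_bin_mono (snd p)"
  using deltaT_nonzero_binary[of _ "fst p" "snd p"]
  by (cases h) (auto simp: delta_a_def is_bin_mono_def split: if_splits)

lemma reduced_leaf_count_pos: "reduced t \<Longrightarrow> 0 < leaf_count t"
proof (induction t)
  case (Node ts)
  then obtain s where "s \<in> set ts" by (cases ts) auto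
  with Node show ?case using member_le_sum_list[of "leaf_count s" "map leaf_count ts"]
    by fastforce
qed simp

lemma reduced_length_le_leaf_count:
  assumes "reduced (Node ts)"
  shows "length ts \<le> leaf_count (Node ts)"
proof -
  have "\<forall>s\<in>set ts. 0 < leaf_count s"
    using assms by (simp add: reduced_leaf_count_pos)
  then have "length ts \<le> sum_list (map leaf_count ts)"
    by (induction ts) auto
  then show ?thesis by simp
qed

lemma reduced_leaf_count_subtree_less:
  assumes "reduced (Node ts)" and "s \<in> set ts"
  shows "leaf_count s < leaf_count (Node ts)"
proof -
  from assms have "remove1 s ts \<noteq> []"
    by (auto simp: length_remove1 dest: arg_cong[of _ _ length])
  then obtain r where r: "r \<in> set (remove1 s ts)" by (cases "remove1 s ts") auto
  with assms have "0 < leaf_count r" by (auto intro: reduced_leaf_count_pos dest: notin_set_remove1)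
  with r have "0 < sum_list (map leaf_count (remove1 s ts))"
    using member_le_sum_list[of "leaf_count r" "map leaf_count (remove1 s ts)"] by auto
  then show ?thesis using assms(2) by (simp add: sum_list_map_remove1)
qed

lemma finite_reduced_trees_bounded:
  assumes "finite L"
  shows "finite {t. reduced t \<and> set_tree t \<subseteq> L \<and> leaf_count t \<le> n}"
proof (induction n)
  case 0
  have "{t. reduced t \<and> set_tree t \<subseteq> L \<and> leaf_count t \<le> 0} = {}"
    using reduced_leaf_count_pos by fastforce
  then show ?case by (metis finite.emptyI)
next
  case (Suc n)
  let ?S = "{t. reduced t \<and> set_tree t \<subseteq> L \<and> leaf_count t \<le> n}"
  have "{t. reduced t \<and> set_tree t \<subseteq> L \<and> leaf_count t \<le> Suc n}
      \<subseteq> Leaf ` L \<union> Node ` {ts. set ts \<subseteq> ?S \<and> length ts \<le> Suc n}"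
  proof
    fix t assume t: "t \<in> {t. reduced t \<and> set_tree t \<subseteq> L \<and> leaf_count t \<le> Suc n}"
    show "t \<in> Leaf ` L \<union> Node ` {ts. set ts \<subseteq> ?S \<and> length ts \<le> Suc n}"
    proof (cases t)
      case (Node ts)
      with t have "length ts \<le> Suc n" "set ts \<subseteq> ?S"
        using reduced_length_le_leaf_count[of ts] reduced_leaf_count_subtree_less[of ts]
        by fastforce+
      with Node show ?thesis by blast
    qed (use t in auto)
  qed
  moreover have "finite (Leaf ` L \<union> Node ` {ts. set ts \<subseteq> ?S \<and> length ts \<le> Suc n})"
    using Suc assms finite_lists_length_le by blast
  ultimately show ?case by (rule finite_subset)
qed

lemma finite_delta_a_nonzero:
  "finite {h. is_mono h \<and> delta_a h (a, b) \<noteq> (0::'k::field)}"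
proof -
  let ?L = "mono_labels a \<union> mono_labels b" and ?n = "mono_degree a + mono_degree b"
  have "finite ?L"
    by (simp add: mono_labels_def split: option.splits)
  have "{h. is_mono h \<and> delta_a h (a, b) \<noteq> (0::'k)}
      \<subseteq> insert None (Some ` {t. reduced t \<and> set_tree t \<subseteq> ?L \<and> leaf_count t \<le> ?n})"
    by (force simp: delta_a_def is_mono_def split: option.splits
        dest: deltaT_nonzero_degree_labels)
  moreover from \<open>finite ?L\<close>
  have "finite (insert None (Some ` {t. reduced t \<and> set_tree t \<subseteq> ?L \<and> leaf_count t \<le> ?n}))"
    by (simp add: finite_reduced_trees_bounded)
  ultimately show ?thesis by (rule finite_subset)
qed

lemma pairT_nonzeroE:
  assumes "pairT S T \<noteq> 0"
  obtains p where "S p \<noteq> 0" "T p \<noteq> 0"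
proof -
  have "\<exists>p. S p * T p \<noteq> 0"
  proof (rule ccontr)
    assume "\<not> (\<exists>p. S p * T p \<noteq> 0)"
    then have "pairT S T = 0" unfolding pairT_def by (intro sum.neutral) blast
    with assms show False by contradiction
  qed
  then obtain p where "S p * T p \<noteq> 0" ..
  then show thesis by (intro that[of p]) simp_all
qed

lemma finite_tensor_support:
  "finite {m. g\<^sub>1 m \<noteq> 0} \<Longrightarrow> finite {m. g\<^sub>2 m \<noteq> 0} \<Longrightarrow>
   finite {p. tensor g\<^sub>1 g\<^sub>2 p \<noteq> (0::'k::field)}"
  by (rule finite_subset[of _ "{m. g\<^sub>1 m \<noteq> 0} \<times> {m. g\<^sub>2 m \<noteq> 0}"]) (auto simp: tensor_def)

lemma shuffle_in_Kinf:
  assumes "finite {m. g\<^sub>1 m \<noteq> (0::'k::field)}" and "finite {m. g\<^sub>2 m \<noteq> 0}"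
  shows "shuffle g\<^sub>1 g\<^sub>2 \<in> Kinf"
proof -
  let ?P = "{p. tensor g\<^sub>1 g\<^sub>2 p \<noteq> 0}"
  have "{h. shuffle g\<^sub>1 g\<^sub>2 h \<noteq> 0} \<subseteq> (\<Union>p\<in>?P. {h. is_mono h \<and> delta_a h p \<noteq> (0::'k)})"
  proof
    fix h assume "h \<in> {h. shuffle g\<^sub>1 g\<^sub>2 h \<noteq> 0}"
    then have "is_mono h" and "pairT (tensor g\<^sub>1 g\<^sub>2) (delta_a h) \<noteq> 0"
      by (auto simp: shuffle_def split: if_splits)
    from this(2) obtain p where "tensor g\<^sub>1 g\<^sub>2 p \<noteq> 0" and "delta_a h p \<noteq> (0::'k)"
      by (rule pairT_nonzeroE)
    with \<open>is_mono h\<close> show "h \<in> (\<Union>p\<in>?P. {h. is_mono h \<and> delta_a h p \<noteq> (0::'k)})"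
      by blast
  qed
  moreover have "finite (\<Union>p\<in>?P. {h. is_mono h \<and> delta_a h p \<noteq> (0::'k)})"
    using finite_tensor_support[OF assms]
    by (rule finite_UN_I) (metis finite_delta_a_nonzero prod.collapse)
  ultimately have "finite {h. shuffle g\<^sub>1 g\<^sub>2 h \<noteq> 0}" by (rule finite_subset)
  then show ?thesis by (auto simp: Kinf_def shuffle_def split: if_splits)
qed

lemma pairT_tensor_proj:
  assumes "finite {m. g\<^sub>1 m \<noteq> (0::'k::field)}" and "finite {m. g\<^sub>2 m \<noteq> 0}"
    and "\<And>p. D p \<noteq> 0 \<Longrightarrow> is_bin_mono (fst p) \<and> is_bin_mono (snd p)"
  shows "pairT (tensor g\<^sub>1 g\<^sub>2) D = pairT (tensor (proj g\<^sub>1) (proj g\<^sub>2)) D"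
  unfolding pairT_def
proof (rule sum.mono_neutral_cong_right)
  show "finite {p. tensor g\<^sub>1 g\<^sub>2 p \<noteq> 0}"
    using finite_tensor_support[OF assms(1,2)] .
qed (use assms(3) in \<open>fastforce simp: tensor_def proj_def split: if_splits\<close>)+

lemma proj_shuffle:
  assumes "finite {m. g\<^sub>1 m \<noteq> (0::'k::field)}" and "finite {m. g\<^sub>2 m \<noteq> 0}"
  shows "proj (shuffle g\<^sub>1 g\<^sub>2) = dual_mult (proj g\<^sub>1) (proj g\<^sub>2)"
proof
  fix h
  show "proj (shuffle g\<^sub>1 g\<^sub>2) h = dual_mult (proj g\<^sub>1) (proj g\<^sub>2) h"
  proof (cases "is_bin_mono h")
    case True
    then have "is_mono h" by (rule is_bin_mono_imp_is_mono)
    moreover have "pairT (tensor g\<^sub>1 g\<^sub>2) (delta_a h)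
        = pairT (tensor (proj g\<^sub>1) (proj g\<^sub>2)) (delta_a h)"
      using assms delta_a_binary_support[OF True] by (rule pairT_tensor_proj)
    ultimately show ?thesis
      using True by (simp add: proj_def shuffle_def dual_mult_def)
  qed (simp add: proj_def dual_mult_def)
qed

theorem proposition4p6p5:
  fixes g1 g2 :: "('x::countable) mono \<Rightarrow> 'k::field_char_0"
  assumes "g1 \<in> Kinf" and "g2 \<in> Kinf"
  shows "shuffle g1 g2 \<in> Kinf
    \<and> proj (shuffle g1 g2) = dual_mult (proj g1) (proj g2)
    \<and> (g1 \<in> KX \<and> g2 \<in> KX \<longrightarrow> dual_mult g1 g2 = proj (shuffle g1 g2))"
proof (intro conjI impI)
  have "finite {m. g1 m \<noteq> 0}" "finite {m. g2 m \<noteq> 0}"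
    using assms by (auto simp: Kinf_def)
  then show "shuffle g1 g2 \<in> Kinf" "proj (shuffle g1 g2) = dual_mult (proj g1) (proj g2)"
    by (rule shuffle_in_Kinf, rule proj_shuffle)
  show "dual_mult g1 g2 = proj (shuffle g1 g2)"
    by (auto simp: dual_mult_def proj_def shuffle_def is_bin_mono_imp_is_mono)
qed

end
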